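(* Let $X$ be a compact metric space and $f\colon X\to X$ continuous with $h_{\mathrm{top}}(f)<\infty$. Let $\Xi=(\xi_1,\dots,\xi_d)\in C(X)^d$ and $\varepsilon>0$ be such that $\overline{B(0,\varepsilon)}\subset\{\int\Xi\,d\mu\mid\mu\in\mathcal{M}^f(X)\}$, and let $\xi_0\in C(X)$. Write $P_0:=\inf_{q\in\mathbb{R}^d}P(\langle q,\Xi\rangle+\xi_0)$. Then (1) for every $q\in\mathbb{R}^d$ with $\|q\|>\frac1\varepsilon(P(\xi_0)+\|\xi_0\|)$, we have $P(\langle q,\Xi\rangle+\xi_0)>P_0$; (2) there exists $\bar q$ with $\|\bar q\|\le\frac1\varepsilon(P(\xi_0)+\|\xi_0\|)$ such that $P(\langle\bar q,\Xi\rangle+\xi_0)=P_0$.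
   Context: $\mathcal{M}^f(X)$ is the set of $f$-invariant Borel probability measures; $P$ is topological pressure on $X$; $\|\xi_0\|$ the sup norm, $\|q\|$ the Euclidean norm; $\int\Xi\,d\mu=(\int\xi_id\mu)_i$; $\langle q,\Xi\rangle=\sum_iq_i\xi_i$; $\overline{B(0,\varepsilon)}$ is the closed Euclidean ball. *)

theory Defs
  imports "HOL-Probability.Probability"
begin

definition bowen_dist :: "('a::metric_space \<Rightarrow> 'a) \<Rightarrow> nat \<Rightarrow> 'a \<Rightarrow> 'a \<Rightarrow> real" where
  "bowen_dist f n x y = (if n = 0 then 0 else Max ((\<lambda>i. dist ((f ^^ i) x) ((f ^^ i) y)) ` {..<n}))"

definition separated_set :: "'a set \<Rightarrow> ('a::metric_space \<Rightarrow> 'a) \<Rightarrow> nat \<Rightarrow> real \<Rightarrow> 'a set \<Rightarrow> bool" where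
  "separated_set X f n \<delta> E \<longleftrightarrow> E \<subseteq> X \<and> (\<forall>x\<in>E. \<forall>y\<in>E. x \<noteq> y \<longrightarrow> bowen_dist f n x y > \<delta>)"

definition birkhoff_sum :: "('a \<Rightarrow> 'a) \<Rightarrow> ('a \<Rightarrow> real) \<Rightarrow> nat \<Rightarrow> 'a \<Rightarrow> real" where
  "birkhoff_sum f \<phi> n x = (\<Sum>i<n. \<phi> ((f ^^ i) x))"

definition pressure_Z :: "'a set \<Rightarrow> ('a::metric_space \<Rightarrow> 'a) \<Rightarrow> ('a \<Rightarrow> real) \<Rightarrow> nat \<Rightarrow> real \<Rightarrow> real" where
  "pressure_Z X f \<phi> n \<delta> =
     Sup {(\<Sum>x\<in>E. exp (birkhoff_sum f \<phi> n x)) | E. finite E \<and> separated_set X f n \<delta> E}"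

definition pressure_delta :: "'a set \<Rightarrow> ('a::metric_space \<Rightarrow> 'a) \<Rightarrow> ('a \<Rightarrow> real) \<Rightarrow> real \<Rightarrow> ereal" where
  "pressure_delta X f \<phi> \<delta> = limsup (\<lambda>n. ereal (ln (pressure_Z X f \<phi> n \<delta>) / real n))"

text \<open>Topological pressure P(phi) = lim_{delta -> 0} P(phi,delta); the limit is monotone,
  so it equals the supremum over delta > 0.\<close>
definition top_pressure :: "'a set \<Rightarrow> ('a::metric_space \<Rightarrow> 'a) \<Rightarrow> ('a \<Rightarrow> real) \<Rightarrow> ereal" where
  "top_pressure X f \<phi> = (SUP \<delta>\<in>{0<..}. pressure_delta X f \<phi> \<delta>)"

definition top_entropy :: "'a set \<Rightarrow> ('a::metric_space \<Rightarrow> 'a) \<Rightarrow> ereal" where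
  "top_entropy X f = top_pressure X f (\<lambda>_. 0)"

definition invariant_measures :: "'a set \<Rightarrow> ('a::metric_space \<Rightarrow> 'a) \<Rightarrow> 'a measure set" where
  "invariant_measures X f = {\<mu>. prob_space \<mu> \<and> sets \<mu> = sets (restrict_space borel X) \<and>
      f \<in> measurable \<mu> \<mu> \<and> distr \<mu> \<mu> f = \<mu>}"

definition sup_norm :: "'a set \<Rightarrow> ('a \<Rightarrow> real) \<Rightarrow> real" where
  "sup_norm X \<phi> = Sup ((\<lambda>x. \<bar>\<phi> x\<bar>) ` X)"

end

theory Submission
  imports Defs
begin

text \<open>Pressure dominates \<open>\<integral>\<phi> d\<mu>\<close> for every invariant \<open>\<mu>\<close> (the singleton at a maximiser of the
  Birkhoff sum is a separated set), and it is monotone and 1-Lipschitz for the sup norm.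
  Hence \<open>q \<mapsto> P(\<langle>q,\<Xi>\<rangle> + \<xi>\<^sub>0)\<close> is finite and Lipschitz. If \<open>\<parallel>q\<parallel>\<close> is large, pick \<open>\<mu>\<close> with
  \<open>\<integral>\<Xi> d\<mu> = \<epsilon> q / \<parallel>q\<parallel>\<close>; then \<open>P(\<langle>q,\<Xi>\<rangle> + \<xi>\<^sub>0) \<ge> \<epsilon> \<parallel>q\<parallel> - \<parallel>\<xi>\<^sub>0\<parallel> > P(\<xi>\<^sub>0)\<close>. So outside the ball
  of radius \<open>(P(\<xi>\<^sub>0) + \<parallel>\<xi>\<^sub>0\<parallel>) / \<epsilon>\<close> the function exceeds its value at \<open>0\<close>, and by
  continuity it attains its infimum inside that ball.\<close>

section \<open>Separated sets\<close>

lemma funpow_image_subset: "f ` X \<subseteq> X \<Longrightarrow> (f ^^ n) ` X \<subseteq> X"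
  by (induction n) (auto simp: image_subset_iff)

lemma continuous_on_funpow:
  assumes "continuous_on X f" "f ` X \<subseteq> X"
  shows "continuous_on X (f ^^ n)"
proof (induction n)
  case (Suc n)
  have "continuous_on X (f \<circ> (f ^^ n))"
    using Suc funpow_image_subset[OF assms(2)]
    by (intro continuous_on_compose) (auto intro: continuous_on_subset[OF assms(1)])
  then show ?case by simp
qed simp

lemma funpow_uniformly_equicontinuous:
  assumes "compact X" "continuous_on X f" "f ` X \<subseteq> X" "\<delta> > 0"
  shows "\<exists>\<eta>>0. \<forall>i<n. \<forall>x\<in>X. \<forall>y\<in>X. dist x y < \<eta> \<longrightarrow> dist ((f ^^ i) x) ((f ^^ i) y) < \<delta>"
proof (induction n)
  case (Suc n)
  then obtain \<eta> where \<eta>: "\<eta> > 0"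
    "\<forall>i<n. \<forall>x\<in>X. \<forall>y\<in>X. dist x y < \<eta> \<longrightarrow> dist ((f ^^ i) x) ((f ^^ i) y) < \<delta>"
    by blast
  have "uniformly_continuous_on X (f ^^ n)"
    using compact_uniformly_continuous continuous_on_funpow assms by blast
  then obtain d where d: "d > 0"
    "\<forall>x\<in>X. \<forall>y\<in>X. dist y x < d \<longrightarrow> dist ((f ^^ n) y) ((f ^^ n) x) < \<delta>"
    using assms(4) unfolding uniformly_continuous_on_def by blast
  show ?case
    using \<eta> d by (intro exI[of _ "min \<eta> d"]) (auto simp: dist_commute less_Suc_eq)
qed (auto intro: exI[of _ 1])

lemma bowen_dist_less:
  assumes "\<delta> > 0" "\<forall>i<n. dist ((f ^^ i) x) ((f ^^ i) y) < \<delta>"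
  shows "bowen_dist f n x y < \<delta>"
proof (cases "n = 0")
  case False
  then show ?thesis
    using assms unfolding bowen_dist_def by (simp only: if_False) (subst Max_less_iff, auto)
qed (simp add: bowen_dist_def assms)

lemma separated_set_card_bounded:
  assumes "compact X" "continuous_on X f" "f ` X \<subseteq> X" "\<delta> > 0"
  obtains N where "\<And>E. finite E \<Longrightarrow> separated_set X f n \<delta> E \<Longrightarrow> card E \<le> N"
proof -
  obtain \<eta> where \<eta>: "\<eta> > 0"
    "\<forall>i<n. \<forall>x\<in>X. \<forall>y\<in>X. dist x y < \<eta> \<longrightarrow> dist ((f ^^ i) x) ((f ^^ i) y) < \<delta>"
    using funpow_uniformly_equicontinuous[OF assms] by blast
  obtain K where K: "K \<subseteq> X" "finite K" "X \<subseteq> (\<Union>c\<in>K. ball c (\<eta>/2))"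
    using compactE_image[OF assms(1), of X "\<lambda>c. ball c (\<eta>/2)"] \<eta>(1) by force
  define centre where "centre x = (SOME c. c \<in> K \<and> x \<in> ball c (\<eta>/2))" for x
  have centre: "centre x \<in> K \<and> x \<in> ball (centre x) (\<eta>/2)" if "x \<in> X" for x
    unfolding centre_def by (rule someI_ex) (use K that in blast)
  \<comment> \<open>Two points with the same centre are \<open>\<eta>\<close>-close, hence not \<open>(n,\<delta>)\<close>-separated.\<close>
  have "card E \<le> card K" if E: "finite E" "separated_set X f n \<delta> E" for E
  proof -
    have EX: "E \<subseteq> X" using E(2) unfolding separated_set_def by blast
    have "inj_on centre E"
    proof (rule inj_onI, rule ccontr)
      fix x y assume xy: "x \<in> E" "y \<in> E" "centre x = centre y" "x \<noteq> y"
      have "dist x y < \<eta>"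
        using centre[of x] centre[of y] xy EX dist_triangle_half_l[of x "centre x" \<eta> y]
        by (auto simp: dist_commute)
      then have "bowen_dist f n x y < \<delta>"
        using \<eta>(2) xy EX assms(4) by (intro bowen_dist_less) auto
      then show False using E(2) xy unfolding separated_set_def by force
    qed
    moreover have "centre ` E \<subseteq> K" using centre EX by blast
    ultimately show ?thesis using card_inj_on_le K(2) by blast
  qed
  then show ?thesis using that by blast
qed

section \<open>Partition sums and pressure\<close>

definition separated_sums :: "'a set \<Rightarrow> ('a::metric_space \<Rightarrow> 'a) \<Rightarrow> ('a \<Rightarrow> real) \<Rightarrow> nat \<Rightarrow> real \<Rightarrow> real set"
  where "separated_sums X f \<phi> n \<delta> =
    {(\<Sum>x\<in>E. exp (birkhoff_sum f \<phi> n x)) | E. finite E \<and> separated_set X f n \<delta> E}"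

lemma pressure_Z_eq_Sup: "pressure_Z X f \<phi> n \<delta> = Sup (separated_sums X f \<phi> n \<delta>)"
  unfolding pressure_Z_def separated_sums_def ..

lemma separated_sums_nonempty: "separated_sums X f \<phi> n \<delta> \<noteq> {}"
  unfolding separated_sums_def separated_set_def by auto

lemma birkhoff_sum_le_shift:
  assumes "f ` X \<subseteq> X" "\<forall>x\<in>X. \<phi> x \<le> \<psi> x + c" "x \<in> X"
  shows "birkhoff_sum f \<phi> n x \<le> birkhoff_sum f \<psi> n x + real n * c"
proof -
  have "birkhoff_sum f \<phi> n x \<le> (\<Sum>i<n. \<psi> ((f ^^ i) x) + c)"
    unfolding birkhoff_sum_def
    using assms funpow_image_subset[OF assms(1)] by (intro sum_mono) blast
  then show ?thesis by (simp add: birkhoff_sum_def sum.distrib)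
qed

lemma pressure_Z_le_shift:
  assumes bdd: "bdd_above (separated_sums X f \<psi> n \<delta>)" and "f ` X \<subseteq> X"
    and le: "\<forall>x\<in>X. \<phi> x \<le> \<psi> x + c"
  shows "bdd_above (separated_sums X f \<phi> n \<delta>)"
    and "pressure_Z X f \<phi> n \<delta> \<le> exp (real n * c) * pressure_Z X f \<psi> n \<delta>"
proof -
  have bound: "s \<le> exp (real n * c) * pressure_Z X f \<psi> n \<delta>"
    if s: "s \<in> separated_sums X f \<phi> n \<delta>" for s
  proof -
    obtain E where E: "s = (\<Sum>x\<in>E. exp (birkhoff_sum f \<phi> n x))" "finite E" "separated_set X f n \<delta> E"
      using s unfolding separated_sums_def by blast
    have "s \<le> (\<Sum>x\<in>E. exp (real n * c) * exp (birkhoff_sum f \<psi> n x))"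
      unfolding E(1)
    proof (rule sum_mono)
      fix x assume "x \<in> E"
      then have "birkhoff_sum f \<phi> n x \<le> birkhoff_sum f \<psi> n x + real n * c"
        using E(3) assms(2) le unfolding separated_set_def by (intro birkhoff_sum_le_shift) blast+
      then show "exp (birkhoff_sum f \<phi> n x) \<le> exp (real n * c) * exp (birkhoff_sum f \<psi> n x)"
        by (simp add: exp_add[symmetric] add.commute)
    qed
    also have "\<dots> = exp (real n * c) * (\<Sum>x\<in>E. exp (birkhoff_sum f \<psi> n x))"
      by (simp add: sum_distrib_left)
    also have "\<dots> \<le> exp (real n * c) * pressure_Z X f \<psi> n \<delta>"
      unfolding pressure_Z_eq_Sup using E
      by (intro mult_left_mono cSup_upper[OF _ bdd]) (auto simp: separated_sums_def)
    finally show ?thesis .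
  qed
  show "bdd_above (separated_sums X f \<phi> n \<delta>)" using bound by (rule bdd_aboveI)
  show "pressure_Z X f \<phi> n \<delta> \<le> exp (real n * c) * pressure_Z X f \<psi> n \<delta>"
    unfolding pressure_Z_eq_Sup[of X f \<phi>] using bound by (rule cSup_least[OF separated_sums_nonempty])
qed

lemma bdd_above_separated_sums:
  assumes "compact X" "continuous_on X f" "f ` X \<subseteq> X" "\<delta> > 0" "continuous_on X \<phi>"
  shows "bdd_above (separated_sums X f \<phi> n \<delta>)"
proof -
  obtain N where N: "\<And>E. finite E \<Longrightarrow> separated_set X f n \<delta> E \<Longrightarrow> card E \<le> N"
    using separated_set_card_bounded[OF assms(1-4)] by blast
  have "bdd_above (separated_sums X f (\<lambda>_. 0) n \<delta>)"
    using N by (intro bdd_aboveI[of _ "real N"]) (auto simp: separated_sums_def birkhoff_sum_def)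
  moreover obtain B where "\<forall>x\<in>X. \<phi> x \<le> B"
    using compact_attains_sup[OF compact_continuous_image[OF assms(5,1)]] by fastforce
  ultimately show ?thesis
    using pressure_Z_le_shift(1)[of X f "\<lambda>_. 0" n \<delta> \<phi> B] assms(3) by simp
qed

lemma exp_birkhoff_sum_le_pressure_Z:
  assumes "bdd_above (separated_sums X f \<phi> n \<delta>)" "x \<in> X"
  shows "exp (birkhoff_sum f \<phi> n x) \<le> pressure_Z X f \<phi> n \<delta>"
proof -
  have "separated_set X f n \<delta> {x}" using assms(2) unfolding separated_set_def by simp
  then have "exp (birkhoff_sum f \<phi> n x) \<in> separated_sums X f \<phi> n \<delta>"
    unfolding separated_sums_def by (intro CollectI exI[of _ "{x}"]) simp
  then show ?thesis unfolding pressure_Z_eq_Sup by (rule cSup_upper[OF _ assms(1)])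
qed

lemma pressure_Z_pos:
  assumes "bdd_above (separated_sums X f \<phi> n \<delta>)" "X \<noteq> {}"
  shows "pressure_Z X f \<phi> n \<delta> > 0"
  using exp_birkhoff_sum_le_pressure_Z[OF assms(1)] assms(2) by (meson ex_in_conv exp_gt_zero less_le_trans)

lemma pressure_delta_le_shift:
  assumes bdd: "\<And>n. bdd_above (separated_sums X f \<psi> n \<delta>)" and "f ` X \<subseteq> X" "X \<noteq> {}"
    and le: "\<forall>x\<in>X. \<phi> x \<le> \<psi> x + c" and "c \<ge> 0"
  shows "pressure_delta X f \<phi> \<delta> \<le> pressure_delta X f \<psi> \<delta> + ereal c"
proof -
  have "ln (pressure_Z X f \<phi> n \<delta>) / real n \<le> ln (pressure_Z X f \<psi> n \<delta>) / real n + c" for n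
  proof (cases "n = 0")
    case False
    note Z\<phi> = pressure_Z_le_shift[OF bdd assms(2) le]
    have Z\<psi>: "pressure_Z X f \<psi> n \<delta> > 0" by (rule pressure_Z_pos[OF bdd assms(3)])
    have "ln (pressure_Z X f \<phi> n \<delta>) \<le> ln (exp (real n * c) * pressure_Z X f \<psi> n \<delta>)"
      using Z\<phi> pressure_Z_pos[OF Z\<phi>(1) assms(3)] Z\<psi> by simp
    also have "\<dots> = real n * c + ln (pressure_Z X f \<psi> n \<delta>)"
      using Z\<psi> by (subst ln_mult) auto
    finally show ?thesis using False by (simp add: divide_simps algebra_simps)
  qed (use \<open>c \<ge> 0\<close> in simp)
  then have "pressure_delta X f \<phi> \<delta> \<le> limsup (\<lambda>n. ereal (ln (pressure_Z X f \<psi> n \<delta>) / real n) + ereal c)"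
    unfolding pressure_delta_def by (intro Limsup_mono always_eventually) simp
  also have "\<dots> = pressure_delta X f \<psi> \<delta> + ereal c"
    unfolding pressure_delta_def by (rule Limsup_add_ereal_right) auto
  finally show ?thesis .
qed

lemma top_pressure_le_shift:
  assumes "compact X" "continuous_on X f" "f ` X \<subseteq> X" "X \<noteq> {}" "continuous_on X \<psi>"
    and "\<forall>x\<in>X. \<phi> x \<le> \<psi> x + c" "c \<ge> 0"
  shows "top_pressure X f \<phi> \<le> top_pressure X f \<psi> + ereal c"
  unfolding top_pressure_def
proof (rule SUP_least)
  fix \<delta> :: real assume "\<delta> \<in> {0<..}"
  then have "pressure_delta X f \<phi> \<delta> \<le> pressure_delta X f \<psi> \<delta> + ereal c"
    using assms by (intro pressure_delta_le_shift bdd_above_separated_sums) auto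
  also have "\<dots> \<le> (SUP \<delta>\<in>{0<..}. pressure_delta X f \<psi> \<delta>) + ereal c"
    using \<open>\<delta> \<in> {0<..}\<close> by (intro add_right_mono SUP_upper)
  finally show "pressure_delta X f \<phi> \<delta> \<le> (SUP \<delta>\<in>{0<..}. pressure_delta X f \<psi> \<delta>) + ereal c" .
qed

lemma ereal_le_pressure_delta:
  assumes bdd: "\<And>n. bdd_above (separated_sums X f \<phi> n \<delta>)"
    and orbit: "\<And>n. \<exists>x\<in>X. real n * a \<le> birkhoff_sum f \<phi> n x"
  shows "ereal a \<le> pressure_delta X f \<phi> \<delta>"
proof -
  have "a \<le> ln (pressure_Z X f \<phi> n \<delta>) / real n" if "n \<ge> 1" for n
  proof -
    obtain x where x: "x \<in> X" "real n * a \<le> birkhoff_sum f \<phi> n x" using orbit by blast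
    have "birkhoff_sum f \<phi> n x \<le> ln (pressure_Z X f \<phi> n \<delta>)"
      using exp_birkhoff_sum_le_pressure_Z[OF bdd x(1)]
      by (metis exp_gt_zero less_le_trans ln_exp ln_le_cancel_iff)
    then show ?thesis using x(2) that by (simp add: divide_simps mult.commute)
  qed
  then have "ereal a \<le> liminf (\<lambda>n. ereal (ln (pressure_Z X f \<phi> n \<delta>) / real n))"
    by (intro Liminf_bounded) (auto simp: eventually_sequentially)
  also have "\<dots> \<le> pressure_delta X f \<phi> \<delta>"
    unfolding pressure_delta_def by (rule Liminf_le_Limsup) simp
  finally show ?thesis .
qed

section \<open>Invariant measures\<close>

lemma invariant_measuresD:
  assumes "\<mu> \<in> invariant_measures X f"
  shows "prob_space \<mu>" "space \<mu> = X" "sets \<mu> = sets (restrict_space borel X)"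
    "f \<in> measurable \<mu> \<mu>" "distr \<mu> \<mu> f = \<mu>"
proof -
  show sets: "sets \<mu> = sets (restrict_space borel X)"
    using assms unfolding invariant_measures_def by blast
  show "space \<mu> = X" using sets_eq_imp_space_eq[OF sets] by (simp add: space_restrict_space)
  show "prob_space \<mu>" "f \<in> measurable \<mu> \<mu>" "distr \<mu> \<mu> f = \<mu>"
    using assms unfolding invariant_measures_def by blast+
qed

lemma invariant_measure_space_nonempty: "\<mu> \<in> invariant_measures X f \<Longrightarrow> X \<noteq> {}"
  using prob_space.not_empty invariant_measuresD(1,2) by metis

lemma borel_measurable_continuous_on_invariant:
  assumes "\<mu> \<in> invariant_measures X f" "continuous_on X \<phi>"
  shows "(\<phi> :: _ \<Rightarrow> real) \<in> borel_measurable \<mu>"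
  using borel_measurable_continuous_on_restrict[OF assms(2)] invariant_measuresD(3)[OF assms(1)]
    measurable_cong_sets[of \<mu> "restrict_space borel X" borel borel] by simp

lemma integrable_continuous_on_invariant:
  assumes \<mu>: "\<mu> \<in> invariant_measures X f" and "compact X" "continuous_on X \<phi>"
  shows "integrable \<mu> (\<phi> :: _ \<Rightarrow> real)"
proof -
  interpret prob_space \<mu> by (rule invariant_measuresD(1)[OF \<mu>])
  obtain B where "\<forall>y\<in>\<phi> ` X. norm y \<le> B"
    using compact_imp_bounded[OF compact_continuous_image[OF assms(3,2)]] unfolding bounded_iff by blast
  then show ?thesis
    using invariant_measuresD(2)[OF \<mu>] borel_measurable_continuous_on_invariant[OF \<mu> assms(3)]
    by (intro integrable_const_bound[where B=B] AE_I2) auto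
qed

lemma integral_funpow_invariant:
  assumes \<mu>: "\<mu> \<in> invariant_measures X f" and \<phi>: "(\<phi> :: _ \<Rightarrow> real) \<in> borel_measurable \<mu>"
  shows "(\<integral>x. \<phi> ((f ^^ i) x) \<partial>\<mu>) = (\<integral>x. \<phi> x \<partial>\<mu>)"
proof (induction i)
  case (Suc i)
  note f = invariant_measuresD(4,5)[OF \<mu>]
  have "(\<lambda>x. \<phi> ((f ^^ i) x)) \<in> borel_measurable \<mu>"
    using measurable_comp[OF measurable_compose_n[OF f(1)] \<phi>] by (simp add: comp_def)
  then have "(\<integral>x. \<phi> ((f ^^ i) (f x)) \<partial>\<mu>) = (\<integral>x. \<phi> ((f ^^ i) x) \<partial>distr \<mu> \<mu> f)"
    by (rule integral_distr[symmetric, OF f(1)])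
  then show ?case using Suc f(2) by (simp del: funpow.simps add: funpow_Suc_right)
qed simp

text \<open>By invariance \<open>n \<integral>\<phi> d\<mu>\<close> is the \<open>\<mu>\<close>-average of the Birkhoff sum, so its maximum
  dominates it.\<close>

lemma exists_birkhoff_sum_ge_integral:
  assumes \<mu>: "\<mu> \<in> invariant_measures X f" and "compact X" "continuous_on X f" "f ` X \<subseteq> X"
    and \<phi>: "continuous_on X \<phi>"
  shows "\<exists>x\<in>X. real n * (\<integral>x. \<phi> x \<partial>\<mu>) \<le> birkhoff_sum f \<phi> n x"
proof -
  interpret prob_space \<mu> by (rule invariant_measuresD(1)[OF \<mu>])
  have cont: "continuous_on X (\<lambda>x. \<phi> ((f ^^ i) x))" for i
    using continuous_on_compose[OF continuous_on_funpow[OF assms(3,4)]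
        continuous_on_subset[OF \<phi> funpow_image_subset[OF assms(4)]]]
    by (simp add: comp_def)
  have int: "integrable \<mu> (\<lambda>x. \<phi> ((f ^^ i) x))" for i
    by (rule integrable_continuous_on_invariant[OF \<mu> assms(2) cont])
  have "continuous_on X (birkhoff_sum f \<phi> n)"
    unfolding birkhoff_sum_def using cont by (intro continuous_on_sum) auto
  then obtain x where x: "x \<in> X" "\<forall>y\<in>X. birkhoff_sum f \<phi> n y \<le> birkhoff_sum f \<phi> n x"
    using continuous_attains_sup[OF assms(2) invariant_measure_space_nonempty[OF \<mu>]] by blast
  have "real n * (\<integral>x. \<phi> x \<partial>\<mu>) = (\<Sum>i<n. \<integral>x. \<phi> ((f ^^ i) x) \<partial>\<mu>)"
    using integral_funpow_invariant[OF \<mu> borel_measurable_continuous_on_invariant[OF \<mu> \<phi>]] by simp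
  also have "\<dots> = (\<integral>y. birkhoff_sum f \<phi> n y \<partial>\<mu>)"
    unfolding birkhoff_sum_def using int by (rule Bochner_Integration.integral_sum[symmetric])
  also have "\<dots> \<le> birkhoff_sum f \<phi> n x"
    unfolding birkhoff_sum_def using int x(2) invariant_measuresD(2)[OF \<mu>]
    by (intro integral_le_const integrable_sum AE_I2) (auto simp: birkhoff_sum_def)
  finally show ?thesis using x(1) by blast
qed

lemma integral_le_top_pressure:
  assumes "\<mu> \<in> invariant_measures X f" "compact X" "continuous_on X f" "f ` X \<subseteq> X"
    and "continuous_on X \<phi>"
  shows "ereal (\<integral>x. \<phi> x \<partial>\<mu>) \<le> top_pressure X f \<phi>"
proof -
  have "ereal (\<integral>x. \<phi> x \<partial>\<mu>) \<le> pressure_delta X f \<phi> 1"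
    using assms by (intro ereal_le_pressure_delta bdd_above_separated_sums exists_birkhoff_sum_ge_integral) auto
  also have "\<dots> \<le> top_pressure X f \<phi>" unfolding top_pressure_def by (rule SUP_upper) simp
  finally show ?thesis .
qed

lemma top_pressure_finite:
  assumes "compact X" "continuous_on X f" "f ` X \<subseteq> X" "top_entropy X f < \<infinity>"
    and "\<mu> \<in> invariant_measures X f" "continuous_on X \<phi>"
  shows "\<bar>top_pressure X f \<phi>\<bar> \<noteq> \<infinity>"
proof -
  obtain B where B: "\<forall>x\<in>X. \<phi> x \<le> B"
    using compact_attains_sup[OF compact_continuous_image[OF assms(6,1)]]
      invariant_measure_space_nonempty[OF assms(5)] by fastforce
  have "top_pressure X f \<phi> \<le> top_pressure X f (\<lambda>_. 0) + ereal \<bar>B\<bar>"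
    using B assms invariant_measure_space_nonempty[OF assms(5)]
    by (intro top_pressure_le_shift) auto
  then have "top_pressure X f \<phi> < \<infinity>"
    using assms(4) unfolding top_entropy_def by (auto simp: less_le_trans)
  moreover have "top_pressure X f \<phi> > -\<infinity>"
    using integral_le_top_pressure[OF assms(5,1-3,6)] by (metis MInfty_neq_ereal(1) ereal_infty_less(2) order_less_le_trans)
  ultimately show ?thesis by auto
qed

section \<open>Pressure of the potentials \<open>\<langle>q,\<Xi>\<rangle> + \<xi>\<^sub>0\<close>\<close>

definition linear_potential :: "('d::finite \<Rightarrow> 'a \<Rightarrow> real) \<Rightarrow> ('a \<Rightarrow> real) \<Rightarrow> real^'d \<Rightarrow> 'a \<Rightarrow> real"
  where "linear_potential \<Xi> \<xi>0 q x = q \<bullet> (\<chi> i. \<Xi> i x) + \<xi>0 x"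

lemma linear_potential_eq_sum:
  "linear_potential \<Xi> \<xi>0 q = (\<lambda>x. (\<Sum>i\<in>UNIV. q $ i * \<Xi> i x) + \<xi>0 x)"
  by (simp add: fun_eq_iff linear_potential_def inner_vec_def)

lemma linear_potential_zero [simp]: "linear_potential \<Xi> \<xi>0 0 = \<xi>0"
  by (simp add: fun_eq_iff linear_potential_def)

lemma continuous_on_linear_potential:
  assumes "\<And>i. continuous_on X (\<Xi> i)" "continuous_on X \<xi>0"
  shows "continuous_on X (linear_potential \<Xi> \<xi>0 q)"
  unfolding linear_potential_def by (intro continuous_intros assms)

lemma linear_potential_le_lipschitz:
  assumes "compact X" "\<And>i. continuous_on X (\<Xi> i)"
  obtains L where "L \<ge> 0"
    "\<And>q p x. x \<in> X \<Longrightarrow> linear_potential \<Xi> \<xi>0 q x \<le> linear_potential \<Xi> \<xi>0 p x + L * dist q p"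
proof -
  have "compact ((\<lambda>x. \<chi> i. \<Xi> i x) ` X)"
    using assms by (intro compact_continuous_image continuous_intros)
  then obtain L where L: "L > 0" "\<forall>v\<in>(\<lambda>x. \<chi> i. \<Xi> i x) ` X. norm v \<le> L"
    using compact_imp_bounded bounded_pos by blast
  have "linear_potential \<Xi> \<xi>0 q x \<le> linear_potential \<Xi> \<xi>0 p x + L * dist q p"
    if "x \<in> X" for q p x
  proof -
    have "linear_potential \<Xi> \<xi>0 q x - linear_potential \<Xi> \<xi>0 p x = (q - p) \<bullet> (\<chi> i. \<Xi> i x)"
      by (simp add: linear_potential_def inner_diff_left)
    also have "\<dots> \<le> norm (q - p) * norm (\<chi> i. \<Xi> i x)" by (rule norm_cauchy_schwarz)
    also have "\<dots> \<le> dist q p * L" using L(2) that by (simp add: dist_norm mult_left_mono)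
    finally show ?thesis by (simp add: mult.commute)
  qed
  moreover have "L \<ge> 0" using L(1) by simp
  ultimately show ?thesis using that by blast
qed

lemma continuous_on_top_pressure_linear_potential:
  assumes "compact X" "continuous_on X f" "f ` X \<subseteq> X" "top_entropy X f < \<infinity>"
    and "\<mu> \<in> invariant_measures X f" "\<And>i. continuous_on X (\<Xi> i)" "continuous_on X \<xi>0"
  shows "continuous_on UNIV (\<lambda>q. real_of_ereal (top_pressure X f (linear_potential \<Xi> \<xi>0 q)))"
proof -
  define G where "G q = real_of_ereal (top_pressure X f (linear_potential \<Xi> \<xi>0 q))" for q
  have potential: "continuous_on X (linear_potential \<Xi> \<xi>0 q)" for q
    using assms(6,7) by (rule continuous_on_linear_potential)
  have finite: "top_pressure X f (linear_potential \<Xi> \<xi>0 q) = ereal (G q)" for q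
    unfolding G_def using top_pressure_finite[OF assms(1-5) potential] by (simp add: ereal_real')
  obtain L where L: "L \<ge> 0"
    "\<And>q p x. x \<in> X \<Longrightarrow> linear_potential \<Xi> \<xi>0 q x \<le> linear_potential \<Xi> \<xi>0 p x + L * dist q p"
    using linear_potential_le_lipschitz[where \<Xi>=\<Xi>, OF assms(1,6)] by blast
  have "G q \<le> G p + L * dist q p" for q p
    using top_pressure_le_shift[OF assms(1-3) invariant_measure_space_nonempty[OF assms(5)]
        potential[of p], where \<phi>="linear_potential \<Xi> \<xi>0 q" and c="L * dist q p"] L
    by (simp add: finite)
  then have "dist (G q) (G p) \<le> L * dist q p" for q p
    by (smt (verit, best) dist_commute dist_real_def)
  then have "continuous_on UNIV G"
    using L(1) by (intro lipschitz_on_continuous_on lipschitz_onI) auto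
  then show ?thesis unfolding G_def .
qed

lemma integral_linear_potential:
  assumes "\<mu> \<in> invariant_measures X f" "compact X" "\<And>i. continuous_on X (\<Xi> i)" "continuous_on X \<xi>0"
  shows "(\<integral>x. linear_potential \<Xi> \<xi>0 q x \<partial>\<mu>) = q \<bullet> (\<chi> i. \<integral>x. \<Xi> i x \<partial>\<mu>) + (\<integral>x. \<xi>0 x \<partial>\<mu>)"
proof -
  have int: "integrable \<mu> (\<Xi> i)" "integrable \<mu> \<xi>0" for i
    using integrable_continuous_on_invariant assms by blast+
  then show ?thesis
    unfolding linear_potential_def inner_vec_def
    by (subst Bochner_Integration.integral_add) (auto simp: Bochner_Integration.integral_sum)
qed

lemma abs_le_sup_norm:
  assumes "compact X" "continuous_on X \<phi>" "x \<in> X"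
  shows "\<bar>\<phi> x\<bar> \<le> sup_norm X \<phi>"
proof -
  have "bounded ((\<lambda>x. \<bar>\<phi> x\<bar>) ` X)"
    using assms by (intro compact_imp_bounded compact_continuous_image continuous_intros)
  then show ?thesis
    unfolding sup_norm_def using assms(3) by (intro cSup_upper bounded_imp_bdd_above) auto
qed

lemma integral_ge_neg_sup_norm:
  assumes \<mu>: "\<mu> \<in> invariant_measures X f" and "compact X" "continuous_on X \<phi>"
  shows "- sup_norm X \<phi> \<le> (\<integral>x. \<phi> x \<partial>\<mu>)"
proof -
  interpret prob_space \<mu> by (rule invariant_measuresD(1)[OF \<mu>])
  show ?thesis
    using abs_le_sup_norm[OF assms(2,3)] invariant_measuresD(2)[OF \<mu>]
    by (intro integral_ge_const integrable_continuous_on_invariant[OF \<mu> assms(2,3)] AE_I2) force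
qed

lemma top_pressure_linear_potential_gt:
  assumes "compact X" "continuous_on X f" "f ` X \<subseteq> X"
    and "\<And>i. continuous_on X (\<Xi> i)" "continuous_on X \<xi>0" "\<epsilon> > 0"
    and cball: "cball (0 :: real^'d) \<epsilon> \<subseteq> {(\<chi> i. integral\<^sup>L \<mu> (\<Xi> i)) | \<mu>. \<mu> \<in> invariant_measures X f}"
    and P: "top_pressure X f \<xi>0 = ereal P"
    and q: "norm q > (P + sup_norm X \<xi>0) / \<epsilon>"
  shows "top_pressure X f (linear_potential \<Xi> \<xi>0 q) > ereal P"
proof -
  have "norm q > 0"
  proof (rule ccontr)
    assume "\<not> norm q > 0"
    then have "P + sup_norm X \<xi>0 < 0" using q \<open>\<epsilon> > 0\<close> by (simp add: divide_less_0_iff)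
    moreover obtain \<mu> where "\<mu> \<in> invariant_measures X f"
      using cball \<open>\<epsilon> > 0\<close> by force
    ultimately show False
      using integral_ge_neg_sup_norm[of \<mu>] integral_le_top_pressure[of \<mu>] assms P by fastforce
  qed
  have "(\<epsilon> / norm q) *\<^sub>R q \<in> cball 0 \<epsilon>" using \<open>norm q > 0\<close> \<open>\<epsilon> > 0\<close> by simp
  then obtain \<mu> where \<mu>: "\<mu> \<in> invariant_measures X f"
    and mean: "(\<epsilon> / norm q) *\<^sub>R q = (\<chi> i. \<integral>x. \<Xi> i x \<partial>\<mu>)"
    using cball by blast
  have "P < \<epsilon> * norm q - sup_norm X \<xi>0" using q \<open>\<epsilon> > 0\<close> by (simp add: field_simps)
  also have "\<epsilon> * norm q = q \<bullet> (\<chi> i. \<integral>x. \<Xi> i x \<partial>\<mu>)"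
    using \<open>norm q > 0\<close> by (simp add: mean[symmetric] dot_square_norm power2_eq_square)
  also have "q \<bullet> (\<chi> i. \<integral>x. \<Xi> i x \<partial>\<mu>) - sup_norm X \<xi>0 \<le> (\<integral>x. linear_potential \<Xi> \<xi>0 q x \<partial>\<mu>)"
    using integral_linear_potential[OF \<mu> assms(1), of \<Xi> \<xi>0 q] integral_ge_neg_sup_norm[OF \<mu> assms(1,5)] assms(4,5)
    by simp
  finally have "ereal P < ereal (\<integral>x. linear_potential \<Xi> \<xi>0 q x \<partial>\<mu>)" by simp
  also have "\<dots> \<le> top_pressure X f (linear_potential \<Xi> \<xi>0 q)"
    by (intro integral_le_top_pressure[OF \<mu> assms(1-3)] continuous_on_linear_potential assms(4,5))
  finally show ?thesis .
qed

lemma continuous_coercive_attains_inf: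
  fixes G :: "'a::{real_normed_vector,heine_borel} \<Rightarrow> real"
  assumes "continuous_on UNIV G" and grow: "\<And>q. norm q > C \<Longrightarrow> G q > G 0"
  obtains qb where "norm qb \<le> C" "\<And>q. G qb \<le> G q"
proof -
  have "0 \<in> cball (0::'a) C" using grow[of 0] by force
  then obtain qb where qb: "qb \<in> cball 0 C" "\<forall>q\<in>cball 0 C. G qb \<le> G q"
    using continuous_attains_inf[OF compact_cball _ continuous_on_subset[OF assms(1)]] by blast
  have "G qb \<le> G q" for q
    using qb(2) grow[of q] bspec[OF qb(2) \<open>0 \<in> cball 0 C\<close>] by (cases "norm q \<le> C") auto
  then show ?thesis using qb(1) that by simp
qed

theorem lemma4p5:
  fixes X :: "'a::metric_space set" and f :: "'a \<Rightarrow> 'a"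
    and \<Xi> :: "'d::finite \<Rightarrow> 'a \<Rightarrow> real" and \<xi>0 :: "'a \<Rightarrow> real" and \<epsilon> :: real
  assumes "compact X"
    and "continuous_on X f" and "f ` X \<subseteq> X"
    and "top_entropy X f < \<infinity>"
    and "\<And>i. continuous_on X (\<Xi> i)"
    and "continuous_on X \<xi>0"
    and "\<epsilon> > 0"
    and "cball (0 :: real^'d) \<epsilon> \<subseteq>
           {(\<chi> i. integral\<^sup>L \<mu> (\<Xi> i)) | \<mu>. \<mu> \<in> invariant_measures X f}"
  defines "P0 \<equiv> (INF q::real^'d. top_pressure X f (\<lambda>x. (\<Sum>i\<in>UNIV. q $ i * \<Xi> i x) + \<xi>0 x))"
  shows "(\<forall>q::real^'d. norm q > (real_of_ereal (top_pressure X f \<xi>0) + sup_norm X \<xi>0) / \<epsilon> \<longrightarrow>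
            top_pressure X f (\<lambda>x. (\<Sum>i\<in>UNIV. q $ i * \<Xi> i x) + \<xi>0 x) > P0)
       \<and> (\<exists>qb::real^'d. norm qb \<le> (real_of_ereal (top_pressure X f \<xi>0) + sup_norm X \<xi>0) / \<epsilon> \<and>
            top_pressure X f (\<lambda>x. (\<Sum>i\<in>UNIV. qb $ i * \<Xi> i x) + \<xi>0 x) = P0)"
proof -
  define G where "G q = real_of_ereal (top_pressure X f (linear_potential \<Xi> \<xi>0 q))" for q
  define C where "C = (G 0 + sup_norm X \<xi>0) / \<epsilon>"
  obtain \<mu> where \<mu>: "\<mu> \<in> invariant_measures X f" using assms(7,8) by force
  have finite: "top_pressure X f (linear_potential \<Xi> \<xi>0 q) = ereal (G q)" for q
    using top_pressure_finite[OF assms(1-4) \<mu>] assms(5,6)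
    by (simp add: G_def ereal_real' continuous_on_linear_potential)
  have P: "top_pressure X f \<xi>0 = ereal (G 0)" using finite[of 0] by simp
  have grow: "G q > G 0" if "norm q > C" for q
    using top_pressure_linear_potential_gt[of X f \<Xi> \<xi>0 \<epsilon> "G 0" q] assms P that
    by (simp add: finite C_def)
  obtain qb where qb: "norm qb \<le> C" "\<And>q. G qb \<le> G q"
    using continuous_coercive_attains_inf[OF continuous_on_top_pressure_linear_potential[OF assms(1-4) \<mu>]]
      grow assms(5,6) unfolding G_def by blast
  have potential: "(\<lambda>x. (\<Sum>i\<in>UNIV. q $ i * \<Xi> i x) + \<xi>0 x) = linear_potential \<Xi> \<xi>0 q" for q
    by (rule linear_potential_eq_sum[symmetric])
  have P0: "P0 = ereal (G qb)"
    unfolding P0_def potential finite using qb(2)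
    by (intro antisym INF_lower2[of qb] INF_greatest) auto
  have "G qb < G q" if "norm q > C" for q
    using qb(2)[of 0] grow[OF that] by linarith
  moreover have "real_of_ereal (top_pressure X f \<xi>0) = G 0" using P by simp
  ultimately show ?thesis
    unfolding potential finite P0 using qb(1) by (auto simp: C_def)
qed

end
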